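(* Let $D^d$ be the space of $\mathbb{R}^d$-valued càdlàg functions on $[0,\infty)$ with the $J_1$-topology, $D_\uparrow$ the space of non-decreasing $[0,\infty)$-valued càdlàg functions on $[0,\infty)$ with the $M_1$-topology, $C^d\subset D^d$ the continuous functions and $D_{\uparrow\uparrow}\subset D_\uparrow$ the strictly increasing ones. Then the composition map $D^d\times D_\uparrow\to D^d$, $(x,y)\mapsto x\circ y$, where the target carries the $L^1_{\mathrm{loc}}$-topology, is continuous at every point $(x,y)\in(C^d\times D_\uparrow)\cup(D^d\times D_{\uparrow\uparrow})$.
   Context: $J_1$-topology: with $\Lambda_T$ the strictly increasing continuous bijections $\lambda:[0,T]\to[0,T]$, $d^T_{J_1}(f_1,f_2)=\inf_{\lambda\in\Lambda_T}\{\sup_{t\le T}|\lambda(t)-t|\vee\sup_{t\le T}|f_1(\lambda(t))-f_2(t)|\}$ and $d_{J_1}=\int_0^\infty e^{-T}(d^T_{J_1}\wedge1)dT$. $M_1$-topology (for real-valued paths): with $\Gamma_f(T)=\{(s,z)\in[0,T]\times\mathbb{R}:z=\theta f(s-)+(1-\theta)f(s),\theta\in[0,1]\}$ and $\Pi_f(T)$ the continuous surjections $(r,u):[0,1]\to\Gamma_f(T)$ with $r(0)=0$, $r(1)=T$ (parametric representations), $d^T_{M_1}(f_1,f_2)=\inf_{(r_i,u_i)\in\Pi_{f_i}(T)}\{\sup|r_1-r_2|\vee\sup|u_1-u_2|\}$ and $d_{M_1}=\int_0^\infty e^{-T}(d^T_{M_1}\wedge1)dT$. $L^1_{\mathrm{loc}}$-topology: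 $f_n\to f$ iff $\int_0^T|f_n(t)-f(t)|dt\to0$ for every $T>0$. *)

theory Defs
  imports "HOL-Analysis.Analysis"
begin

text \<open>Paths are functions on the reals; only their values on [0,\<infinity>) matter.\<close>

definition cadlag :: "(real \<Rightarrow> 'a::metric_space) \<Rightarrow> bool" where
  "cadlag f \<longleftrightarrow> (\<forall>t\<ge>0. (f \<longlongrightarrow> f t) (at_right t)) \<and>
                 (\<forall>t>0. \<exists>l. (f \<longlongrightarrow> l) (at_left t))"

definition lft :: "(real \<Rightarrow> 'a::metric_space) \<Rightarrow> real \<Rightarrow> 'a" where
  "lft f s = (if s \<le> 0 then f 0 else Lim (at_left s) f)"

definition Dup :: "(real \<Rightarrow> real) set" where
  "Dup = {f. cadlag f \<and> mono_on {0..} f \<and> (\<forall>t\<ge>0. f t \<ge> 0)}"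

definition Dupup :: "(real \<Rightarrow> real) set" where
  "Dupup = {f. f \<in> Dup \<and> strict_mono_on {0..} f}"

definition LambdaT :: "real \<Rightarrow> (real \<Rightarrow> real) set" where
  "LambdaT T = {lam. strict_mono_on {0..T} lam \<and> continuous_on {0..T} lam \<and>
                     bij_betw lam {0..T} {0..T}}"

definition dJ1T :: "real \<Rightarrow> (real \<Rightarrow> 'a::real_normed_vector) \<Rightarrow> (real \<Rightarrow> 'a) \<Rightarrow> real" where
  "dJ1T T f1 f2 = Inf {max (Sup ((\<lambda>t. \<bar>lam t - t\<bar>) ` {0..T}))
                           (Sup ((\<lambda>t. norm (f1 (lam t) - f2 t)) ` {0..T})) | lam. lam \<in> LambdaT T}"

definition dJ1 :: "(real \<Rightarrow> 'a::real_normed_vector) \<Rightarrow> (real \<Rightarrow> 'a) \<Rightarrow> ennreal" where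
  "dJ1 f1 f2 = (\<integral>\<^sup>+ T \<in> {0<..}. ennreal (exp (- T) * min (dJ1T T f1 f2) 1) \<partial>lborel)"

definition GammaT :: "(real \<Rightarrow> real) \<Rightarrow> real \<Rightarrow> (real \<times> real) set" where
  "GammaT f T = {(s, z). s \<in> {0..T} \<and> z \<in> closed_segment (lft f s) (f s)}"

definition graph_le :: "(real \<Rightarrow> real) \<Rightarrow> real \<times> real \<Rightarrow> real \<times> real \<Rightarrow> bool" where
  "graph_le f p q \<longleftrightarrow> fst p < fst q \<or>
     (fst p = fst q \<and> \<bar>lft f (fst p) - snd p\<bar> \<le> \<bar>lft f (fst p) - snd q\<bar>)"

definition PiT :: "(real \<Rightarrow> real) \<Rightarrow> real \<Rightarrow> ((real \<Rightarrow> real) \<times> (real \<Rightarrow> real)) set" where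
  "PiT f T = {(r, u). continuous_on {0..1} r \<and> continuous_on {0..1} u \<and>
                (\<lambda>t. (r t, u t)) ` {0..1} = GammaT f T \<and> r 0 = 0 \<and> r 1 = T \<and>
                (\<forall>a b. 0 \<le> a \<and> a \<le> b \<and> b \<le> 1 \<longrightarrow> graph_le f (r a, u a) (r b, u b))}"

definition dM1T :: "real \<Rightarrow> (real \<Rightarrow> real) \<Rightarrow> (real \<Rightarrow> real) \<Rightarrow> real" where
  "dM1T T f1 f2 = Inf {max (Sup ((\<lambda>t. \<bar>r1 t - r2 t\<bar>) ` {0..1}))
                           (Sup ((\<lambda>t. \<bar>u1 t - u2 t\<bar>) ` {0..1})) | r1 u1 r2 u2.
                        (r1, u1) \<in> PiT f1 T \<and> (r2, u2) \<in> PiT f2 T}"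

definition dM1 :: "(real \<Rightarrow> real) \<Rightarrow> (real \<Rightarrow> real) \<Rightarrow> ennreal" where
  "dM1 f1 f2 = (\<integral>\<^sup>+ T \<in> {0<..}. ennreal (exp (- T) * min (dM1T T f1 f2) 1) \<partial>lborel)"

definition L1loc_tendsto :: "(nat \<Rightarrow> real \<Rightarrow> 'a::real_normed_vector) \<Rightarrow> (real \<Rightarrow> 'a) \<Rightarrow> bool" where
  "L1loc_tendsto fs f \<longleftrightarrow>
     (\<forall>T>0. (\<lambda>n. LBINT t:{0..T}. norm (fs n t - f t)) \<longlonglongrightarrow> 0)"

end

(*
  On [0, T] the integrands are eventually uniformly bounded, so by bounded convergence it suffices
  that xs n (ys n t) converges to x (y t) for almost every t. This holds whenever t > 0, y is
  continuous at t and x is continuous at y t; the remaining t form a countable set, because a cadlag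
  path has countably many jumps and, in the strictly increasing case, y is injective.
  At such a t, M1-closeness of ys n to y provides a point (s, z) of the completed graph of y with s
  near t and z near ys n t, and J1-closeness of xs n to x provides v near ys n t with xs n (ys n t)
  near x v. Continuity of y at t puts z, hence v, near y t, and continuity of x at y t concludes.
*)
theory Submission
  imports Defs
begin

section \<open>Cadlag paths\<close>

lemma cadlag_tendsto_right:
  assumes "cadlag f" "t \<ge> 0"
  shows "(f \<longlongrightarrow> f t) (at_right t)"
  using assms unfolding cadlag_def by blast

lemma cadlag_tendsto_lft:
  assumes "cadlag f" "t > 0"
  shows "(f \<longlongrightarrow> lft f t) (at_left t)"
proof -
  obtain l where l: "(f \<longlongrightarrow> l) (at_left t)"
    using assms unfolding cadlag_def by blast
  then have "lft f t = l"
    using assms(2) tendsto_Lim[OF _ l] by (simp add: lft_def)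
  with l show ?thesis by simp
qed

lemma isCont_cadlag_if_lft_eq:
  assumes "cadlag f" "t > 0" "lft f t = f t"
  shows "isCont f t"
  unfolding isCont_def
  using cadlag_tendsto_lft[OF assms(1,2)] cadlag_tendsto_right[OF assms(1)] assms(2,3)
  by (intro filterlim_split_at) auto

lemma dist_lft_le:
  fixes y :: "real \<Rightarrow> 'a::metric_space"
  assumes y: "cadlag y" and near: "\<And>v. 0 \<le> v \<Longrightarrow> \<bar>v - t\<bar> < d \<Longrightarrow> dist (y v) c \<le> h"
    and s: "0 \<le> s" "\<bar>s - t\<bar> < d"
  shows "dist (lft y s) c \<le> h"
proof (cases "s = 0")
  case False
  with s have "s > 0"
    by simp
  have "\<forall>\<^sub>F v in at_left s. dist (y v) c \<le> h"
    unfolding eventually_at_left_field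
    using s \<open>s > 0\<close> by (intro exI[of _ "max 0 (s - (d - \<bar>s - t\<bar>))"]) (auto intro!: near)
  then show ?thesis
    by (intro tendsto_upperbound[OF tendsto_dist[OF cadlag_tendsto_lft[OF y \<open>s > 0\<close>] tendsto_const]]) auto
qed (use near s in \<open>simp add: lft_def\<close>)

text \<open>Each jump time \<open>t\<close> of size \<open>> e\<close> gets a rational \<open>q < t\<close> such that \<open>f\<close> stays within
  \<open>e/4\<close> of \<open>lft f t\<close> on \<open>]q, t[\<close>. Two jump times \<open>t < t'\<close> cannot share \<open>q\<close>: both \<open>f t\<close> and the
  values of \<open>f\<close> just before \<open>t\<close> would lie within \<open>e/4\<close> of \<open>lft f t'\<close>, so the jump at \<open>t\<close> would
  be smaller than \<open>e\<close>.\<close>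
lemma countable_jumps_greater:
  fixes f :: "real \<Rightarrow> 'a::metric_space"
  assumes f: "cadlag f" and e: "e > 0"
  shows "countable {t. 0 < t \<and> e < dist (lft f t) (f t)}" (is "countable ?J")
proof -
  have "\<forall>t\<in>?J. \<exists>q\<in>\<rat>. q < t \<and> (\<forall>s. q < s \<and> s < t \<longrightarrow> dist (f s) (lft f t) < e/4)"
  proof
    fix t assume "t \<in> ?J"
    have "eventually (\<lambda>s. dist (f s) (lft f t) < e/4) (at_left t)"
      using cadlag_tendsto_lft[OF f] \<open>t \<in> ?J\<close> e by (intro tendstoD) auto
    then obtain b where b: "b < t" "\<And>s. b < s \<Longrightarrow> s < t \<Longrightarrow> dist (f s) (lft f t) < e/4"
      unfolding eventually_at_left_field by blast
    obtain q where "q \<in> \<rat>" "b < q" "q < t"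
      using Rats_dense_in_real[OF b(1)] by blast
    with b show "\<exists>q\<in>\<rat>. q < t \<and> (\<forall>s. q < s \<and> s < t \<longrightarrow> dist (f s) (lft f t) < e/4)"
      by (intro bexI[of _ q]) auto
  qed
  then obtain q where q: "\<And>t. t \<in> ?J \<Longrightarrow> q t \<in> \<rat> \<and> q t < t \<and>
      (\<forall>s. q t < s \<and> s < t \<longrightarrow> dist (f s) (lft f t) < e/4)"
    by metis
  have no_shared: False if "t \<in> ?J" "t' \<in> ?J" "q t = q t'" "t < t'" for t t'
  proof -
    define s where "s = (q t + t) / 2"
    have "q t < t"
      using q[OF that(1)] by blast
    then have s: "q t < s" "s < t"
      unfolding s_def by auto
    have "dist (f s) (lft f t) < e/4"
      using q[OF that(1)] s by blast
    moreover have "dist (f s) (lft f t') < e/4"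
      using q[OF that(2)] s that(3,4) by auto
    moreover have "dist (f t) (lft f t') < e/4"
      using q[OF that(2)] \<open>q t < t\<close> that(3,4) by auto
    ultimately have "dist (lft f t) (f t) < e"
      using dist_triangle[of "lft f t" "f t" "f s"] dist_triangle[of "f s" "f t" "lft f t'"]
        dist_commute[of "lft f t" "f s"] dist_commute[of "lft f t'" "f t"] e
      by linarith
    with that(1) show False by simp
  qed
  have "inj_on q ?J"
  proof (rule inj_onI)
    fix t t' assume "t \<in> ?J" "t' \<in> ?J" "q t = q t'"
    then show "t = t'"
      using no_shared[of t t'] no_shared[of t' t] by (cases t t' rule: linorder_cases) auto
  qed
  moreover have "q ` ?J \<subseteq> \<rat>"
    using q by auto
  ultimately show ?thesis
    by (meson countable_image_inj_on countable_rat countable_subset)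
qed

lemma countable_discontinuities_cadlag:
  fixes f :: "real \<Rightarrow> 'a::metric_space"
  assumes f: "cadlag f"
  shows "countable {t. 0 < t \<and> \<not> isCont f t}"
proof -
  have "{t. 0 < t \<and> \<not> isCont f t} \<subseteq> (\<Union>m::nat. {t. 0 < t \<and> 1 / Suc m < dist (lft f t) (f t)})"
  proof safe
    fix t assume "0 < t" "\<not> isCont f t"
    then have "0 < dist (lft f t) (f t)"
      using isCont_cadlag_if_lft_eq[OF f] by auto
    then obtain m where "1 / Suc m < dist (lft f t) (f t)"
      by (metis nat_approx_posE)
    with \<open>0 < t\<close> show "t \<in> (\<Union>m. {t. 0 < t \<and> 1 / Suc m < dist (lft f t) (f t)})"
      by blast
  qed
  then show ?thesis
    by (rule countable_subset) (intro countable_UN[of UNIV] countable_jumps_greater[OF f]; simp)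
qed

lemma cadlag_locally_bounded:
  fixes f :: "real \<Rightarrow> 'a::real_normed_vector"
  assumes f: "cadlag f" and t: "t \<ge> 0"
  obtains d B where "d > 0" "\<And>s. s \<ge> 0 \<Longrightarrow> \<bar>s - t\<bar> < d \<Longrightarrow> norm (f s) \<le> B"
proof -
  have "eventually (\<lambda>s. dist (f s) (f t) < 1) (at_right t)"
    using cadlag_tendsto_right[OF f t] by (intro tendstoD) auto
  then obtain b where b: "t < b" "\<And>s. t < s \<Longrightarrow> s < b \<Longrightarrow> dist (f s) (f t) < 1"
    unfolding eventually_at_right_field by blast
  have "\<exists>a<t. \<forall>s. a < s \<and> s < t \<and> 0 \<le> s \<longrightarrow> dist (f s) (lft f t) < 1"
  proof (cases "t = 0")
    case True
    then show ?thesis by (intro exI[of _ "-1"]) auto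
  next
    case False
    then have "eventually (\<lambda>s. dist (f s) (lft f t) < 1) (at_left t)"
      using cadlag_tendsto_lft[OF f] t by (intro tendstoD) auto
    then show ?thesis
      unfolding eventually_at_left_field by blast
  qed
  then obtain a where a: "a < t" "\<And>s. a < s \<Longrightarrow> s < t \<Longrightarrow> 0 \<le> s \<Longrightarrow> dist (f s) (lft f t) < 1"
    by blast
  have "norm (f s) \<le> max (norm (f t)) (norm (lft f t)) + 1"
    if "0 \<le> s" "\<bar>s - t\<bar> < min (b - t) (t - a)" for s
  proof -
    have "norm (f s) \<le> norm (f t) + 1" if "dist (f s) (f t) < 1"
      using that norm_triangle_ineq2[of "f s" "f t"] by (simp add: dist_norm)
    moreover have "norm (f s) \<le> norm (lft f t) + 1" if "dist (f s) (lft f t) < 1"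
      using that norm_triangle_ineq2[of "f s" "lft f t"] by (simp add: dist_norm)
    ultimately show ?thesis
      using a(2)[of s] b(2)[of s] that by (cases s t rule: linorder_cases) auto
  qed
  moreover have "min (b - t) (t - a) > 0"
    using a b by simp
  ultimately show ?thesis
    using that by blast
qed

lemma cadlag_bounded_Icc:
  fixes f :: "real \<Rightarrow> 'a::real_normed_vector"
  assumes f: "cadlag f"
  obtains B where "\<And>t. t \<in> {0..T} \<Longrightarrow> norm (f t) \<le> B"
proof -
  have "\<forall>t\<in>{0..T}. \<exists>d B. d > 0 \<and> (\<forall>s\<ge>0. \<bar>s - t\<bar> < d \<longrightarrow> norm (f s) \<le> B)"
    using cadlag_locally_bounded[OF f] by (metis atLeastAtMost_iff)
  then obtain d B where dB: "\<And>t. t \<in> {0..T} \<Longrightarrow> d t > 0 \<and> (\<forall>s\<ge>0. \<bar>s - t\<bar> < d t \<longrightarrow> norm (f s) \<le> B t)"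
    by metis
  have cover: "{0..T} \<subseteq> (\<Union>t\<in>{0..T}. ball t (d t))"
    using dB by force
  obtain S where S: "S \<subseteq> {0..T}" "finite S" "{0..T} \<subseteq> (\<Union>t\<in>S. ball t (d t))"
    by (rule compactE_image[OF compact_Icc _ cover]) simp_all
  have "norm (f s) \<le> (\<Sum>t\<in>S. \<bar>B t\<bar>)" if s: "s \<in> {0..T}" for s
  proof -
    obtain t where t: "t \<in> S" "s \<in> ball t (d t)"
      using S s by blast
    then have "norm (f s) \<le> \<bar>B t\<bar>"
      using dB[of t] S s by (force simp: dist_real_def abs_minus_commute)
    also have "\<dots> \<le> (\<Sum>t\<in>S. \<bar>B t\<bar>)"
      using t S by (intro member_le_sum) auto
    finally show ?thesis .
  qed
  then show ?thesis
    using that by blast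
qed

lemma borel_measurable_cadlag:
  fixes f :: "real \<Rightarrow> 'a::metric_space"
  assumes f: "cadlag f"
  shows "(\<lambda>t. f (max 0 t)) \<in> borel_measurable borel"
proof (rule borel_measurable_continuous_countable_exceptions[OF countable_discontinuities_cadlag[OF f]])
  show "continuous_on (- {t. 0 < t \<and> \<not> isCont f t}) (\<lambda>t. f (max 0 t))"
  proof (intro continuous_at_imp_continuous_on ballI)
    fix t assume t: "t \<in> - {t. 0 < t \<and> \<not> isCont f t}"
    consider "t > 0" | "t < 0" | "t = 0" by linarith
    then show "isCont (\<lambda>t. f (max 0 t)) t"
    proof cases
      case 1
      then have "isCont f (max 0 t)"
        using t by simp
      moreover have "isCont (\<lambda>s. max 0 s) t"
        by (intro continuous_intros)
      ultimately show ?thesis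
        using isCont_o2 by blast
    next
      case 2
      have "eventually (\<lambda>s. s \<in> {..<0}) (nhds t)"
        using 2 by (intro eventually_nhds_in_open) auto
      then have "eventually (\<lambda>s. f (max 0 s) = f 0) (nhds t)"
        by eventually_elim simp
      then show ?thesis
        by (subst isCont_cong) auto
    next
      case 3
      have "((\<lambda>s. f (max 0 s)) \<longlongrightarrow> f 0) (at_left 0)"
        by (rule tendsto_eventually) (auto simp: eventually_at_left_field intro: exI[of _ "-1"])
      moreover have "((\<lambda>s. f (max 0 s)) \<longlongrightarrow> f 0) (at_right 0)"
        using cadlag_tendsto_right[OF f, of 0]
        by (rule Lim_transform_eventually) (auto simp: eventually_at_right_field intro: exI[of _ 1])
      ultimately show ?thesis
        unfolding isCont_def 3 by (intro filterlim_split_at) auto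
    qed
  qed
qed

section \<open>Convergence in the \<open>J\<^sub>1\<close> metric\<close>

lemma exp_weighted_integral_tendsto_0_imp_small:
  fixes d :: "nat \<Rightarrow> real \<Rightarrow> real"
  assumes lim: "(\<lambda>n. \<integral>\<^sup>+ T \<in> {0<..}. ennreal (exp (- T) * min (d n T) 1) \<partial>lborel) \<longlonglongrightarrow> 0"
    and T0: "T0 > 0" and e: "0 < e" "e \<le> 1"
  shows "eventually (\<lambda>n. \<exists>T\<in>{T0..T0+1}. d n T < e) sequentially"
proof -
  define c where "c = exp (- (T0 + 1)) * e"
  have "c > 0"
    unfolding c_def using e by simp
  with lim have "eventually (\<lambda>n. (\<integral>\<^sup>+ T \<in> {0<..}. ennreal (exp (- T) * min (d n T) 1) \<partial>lborel) < c) sequentially"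
    by (intro order_tendstoD(2)) auto
  then show ?thesis
  proof (rule eventually_mono)
    fix n assume small: "(\<integral>\<^sup>+ T \<in> {0<..}. ennreal (exp (- T) * min (d n T) 1) \<partial>lborel) < c"
    show "\<exists>T\<in>{T0..T0+1}. d n T < e"
    proof (rule ccontr)
      assume "\<not> ?thesis"
      then have ge: "e \<le> d n T" if "T \<in> {T0..T0+1}" for T
        using that by force
      have "ennreal c = (\<integral>\<^sup>+ T. ennreal c * indicator {T0..T0+1} T \<partial>lborel)"
        by (subst nn_integral_cmult_indicator) auto
      also have "\<dots> \<le> (\<integral>\<^sup>+ T \<in> {0<..}. ennreal (exp (- T) * min (d n T) 1) \<partial>lborel)"
      proof (intro nn_integral_mono)
        fix T :: real
        show "ennreal c * indicator {T0..T0+1} T \<le> ennreal (exp (- T) * min (d n T) 1) * indicator {0<..} T"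
        proof (cases "T \<in> {T0..T0+1}")
          case True
          have "exp (- (T0 + 1)) \<le> exp (- T)" "e \<le> min (d n T) 1"
            using True ge[OF True] e by auto
          then have "c \<le> exp (- T) * min (d n T) 1"
            unfolding c_def using e by (intro mult_mono) auto
          then show ?thesis
            using True T0 by (simp add: ennreal_leI)
        qed simp
      qed
      finally show False
        using small by simp
    qed
  qed
qed

lemma less_if_max_Sup_less:
  fixes f g :: "'a \<Rightarrow> real"
  assumes "max (Sup (f ` S)) (Sup (g ` S)) < e" "bdd_above (f ` S)" "bdd_above (g ` S)" "t \<in> S"
  shows "f t < e \<and> g t < e"
  using cSup_upper[of "f t" "f ` S"] cSup_upper[of "g t" "g ` S"] assms by auto

lemma id_in_LambdaT: "T \<ge> 0 \<Longrightarrow> (\<lambda>t. t) \<in> LambdaT T"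
  unfolding LambdaT_def by (auto simp: strict_mono_on_def bij_betw_def)

lemma dJ1T_less_imp_time_change:
  fixes f g :: "real \<Rightarrow> 'a::real_normed_vector"
  assumes f: "cadlag f" and g: "cadlag g" and T: "T \<ge> 0" and less: "dJ1T T f g < e"
  obtains lam where "lam \<in> LambdaT T"
    "\<And>t. t \<in> {0..T} \<Longrightarrow> \<bar>lam t - t\<bar> < e \<and> norm (f (lam t) - g t) < e"
proof -
  let ?S = "{max (Sup ((\<lambda>t. \<bar>lam t - t\<bar>) ` {0..T})) (Sup ((\<lambda>t. norm (f (lam t) - g t)) ` {0..T}))
             | lam. lam \<in> LambdaT T}"
  have "?S \<noteq> {}"
    using id_in_LambdaT[OF T] by blast
  then obtain lam where lam: "lam \<in> LambdaT T"
    and lt: "max (Sup ((\<lambda>t. \<bar>lam t - t\<bar>) ` {0..T})) (Sup ((\<lambda>t. norm (f (lam t) - g t)) ` {0..T})) < e"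
    using cInf_lessD[of ?S e] less unfolding dJ1T_def by blast
  have into: "lam t \<in> {0..T}" if "t \<in> {0..T}" for t
    using lam that unfolding LambdaT_def bij_betw_def by auto
  obtain Bf Bg where Bf: "\<And>t. t \<in> {0..T} \<Longrightarrow> norm (f t) \<le> Bf"
    and Bg: "\<And>t. t \<in> {0..T} \<Longrightarrow> norm (g t) \<le> Bg"
    using cadlag_bounded_Icc[OF f] cadlag_bounded_Icc[OF g] by metis
  have "norm (f (lam t) - g t) \<le> Bf + Bg" if "t \<in> {0..T}" for t
    using norm_triangle_ineq4[of "f (lam t)" "g t"] Bf[OF into[OF that]] Bg[OF that] by linarith
  then have "bdd_above ((\<lambda>t. norm (f (lam t) - g t)) ` {0..T})"
    by (intro bdd_aboveI2)
  moreover have "bdd_above ((\<lambda>t. \<bar>lam t - t\<bar>) ` {0..T})"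
    using into by (intro bdd_aboveI2[of _ _ T]) force
  ultimately have "\<bar>lam t - t\<bar> < e \<and> norm (f (lam t) - g t) < e" if "t \<in> {0..T}" for t
    using less_if_max_Sup_less[OF lt _ _ that] by blast
  with lam show ?thesis
    by (rule that)
qed

lemma dJ1_tendsto_0_imp_close:
  fixes x :: "real \<Rightarrow> 'a::real_normed_vector" and xs :: "nat \<Rightarrow> real \<Rightarrow> 'a"
  assumes x: "cadlag x" and xs: "\<And>n. cadlag (xs n)" and lim: "(\<lambda>n. dJ1 (xs n) x) \<longlonglongrightarrow> 0"
    and T: "T > 0" and e: "0 < e" "e \<le> 1"
  shows "eventually (\<lambda>n. \<forall>w\<in>{0..T}. \<exists>v\<in>{0..T+1}. \<bar>v - w\<bar> < e \<and> norm (xs n w - x v) < e)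
           sequentially"
  using exp_weighted_integral_tendsto_0_imp_small[OF lim[unfolded dJ1_def] T e]
proof (rule eventually_mono)
  fix n assume "\<exists>T'\<in>{T..T+1}. dJ1T T' (xs n) x < e"
  then obtain T' where T': "T' \<in> {T..T+1}" "dJ1T T' (xs n) x < e"
    by blast
  with T have "T' \<ge> 0"
    by auto
  obtain lam where lam: "lam \<in> LambdaT T'"
    and close: "\<And>t. t \<in> {0..T'} \<Longrightarrow> \<bar>lam t - t\<bar> < e \<and> norm (xs n (lam t) - x t) < e"
    using dJ1T_less_imp_time_change[OF xs x \<open>T' \<ge> 0\<close> T'(2)] by blast
  show "\<forall>w\<in>{0..T}. \<exists>v\<in>{0..T+1}. \<bar>v - w\<bar> < e \<and> norm (xs n w - x v) < e"
  proof
    fix w assume "w \<in> {0..T}"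
    then have "w \<in> lam ` {0..T'}"
      using lam T' unfolding LambdaT_def bij_betw_def by auto
    then obtain v where "v \<in> {0..T'}" "w = lam v"
      by blast
    then show "\<exists>v\<in>{0..T+1}. \<bar>v - w\<bar> < e \<and> norm (xs n w - x v) < e"
      using close[of v] T' by (intro bexI[of _ v]) (auto simp: abs_minus_commute)
  qed
qed

section \<open>Parametric representations and the \<open>M\<^sub>1\<close> metric\<close>

lemma Dup_cadlag: "f \<in> Dup \<Longrightarrow> cadlag f"
  unfolding Dup_def by auto

lemma Dup_mono: "f \<in> Dup \<Longrightarrow> 0 \<le> a \<Longrightarrow> a \<le> b \<Longrightarrow> f a \<le> f b"
  unfolding Dup_def mono_on_def by auto

lemma Dup_nonneg: "f \<in> Dup \<Longrightarrow> 0 \<le> a \<Longrightarrow> 0 \<le> f a"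
  unfolding Dup_def by auto

lemma Dup_le_lft:
  assumes f: "f \<in> Dup" and a: "0 \<le> a" "a < s"
  shows "f a \<le> lft f s"
proof (rule tendsto_lowerbound[OF cadlag_tendsto_lft[OF Dup_cadlag[OF f]]])
  show "\<forall>\<^sub>F v in at_left s. f a \<le> f v"
    unfolding eventually_at_left_field using a by (auto intro!: exI[of _ a] Dup_mono[OF f])
qed (use a in auto)

lemma Dup_lft_le:
  assumes f: "f \<in> Dup" and s: "0 \<le> s"
  shows "lft f s \<le> f s"
proof (cases "s = 0")
  case False
  with s have "s > 0" by simp
  show ?thesis
  proof (rule tendsto_upperbound[OF cadlag_tendsto_lft[OF Dup_cadlag[OF f] \<open>s > 0\<close>]])
    show "\<forall>\<^sub>F v in at_left s. f v \<le> f s"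
      unfolding eventually_at_left_field using \<open>s > 0\<close> by (auto intro!: exI[of _ 0] Dup_mono[OF f])
  qed simp
qed (simp add: lft_def)

lemma Dup_le_lft0:
  assumes f: "f \<in> Dup" and s: "0 \<le> s"
  shows "f 0 \<le> lft f s"
  using Dup_le_lft[OF f, of 0 s] s by (cases "s = 0") (auto simp: lft_def)

text \<open>The completed graph of a non-decreasing \<open>f\<close> on \<open>[0, T]\<close> is parametrised by \<open>p = s + z\<close>,
  which runs through \<open>[f 0, T + f T]\<close>; \<open>graph_time f T p\<close> recovers the time coordinate \<open>s\<close>. It is a
  generalised inverse of the strictly increasing map \<open>s \<mapsto> s + f s\<close>, and therefore 1-Lipschitz.\<close>
definition graph_time :: "(real \<Rightarrow> real) \<Rightarrow> real \<Rightarrow> real \<Rightarrow> real" where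
  "graph_time f T p = Inf {s \<in> {0..T}. p \<le> s + f s}"

context
  fixes f :: "real \<Rightarrow> real" and T :: real
  assumes f: "f \<in> Dup" and T: "T > 0"
begin

lemma graph_time_le:
  assumes "s \<in> {0..T}" "p \<le> s + f s"
  shows "graph_time f T p \<le> s"
  unfolding graph_time_def using assms by (intro cInf_lower) (auto intro: bdd_belowI[of _ 0])

lemma graph_time_bounds:
  assumes "p \<le> T + f T"
  shows "graph_time f T p \<in> {0..T}"
proof -
  have "T \<in> {s \<in> {0..T}. p \<le> s + f s}"
    using assms T by auto
  then have "0 \<le> graph_time f T p"
    unfolding graph_time_def by (intro cInf_greatest) auto
  with graph_time_le[of T p] assms T show ?thesis
    by auto
qed

lemma add_less_if_less_graph_time:
  assumes "p \<le> T + f T" "0 \<le> s" "s < graph_time f T p"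
  shows "s + f s < p"
  using graph_time_le[of s p] graph_time_bounds[OF assms(1)] assms(2,3) by force

lemma le_graph_time_add:
  assumes p: "p \<le> T + f T"
  shows "p \<le> graph_time f T p + f (graph_time f T p)"
proof (cases "graph_time f T p = T")
  case False
  let ?s = "graph_time f T p"
  have s: "0 \<le> ?s" "?s < T"
    using graph_time_bounds[OF p] False by auto
  have "\<forall>\<^sub>F v in at_right ?s. p \<le> v + f v"
    unfolding eventually_at_right_field
  proof (intro exI[of _ T] conjI allI impI)
    fix v assume v: "?s < v" "v < T"
    have "{s \<in> {0..T}. p \<le> s + f s} \<noteq> {}"
      using p T by auto
    then obtain s' where "s' \<in> {0..T}" "p \<le> s' + f s'" "s' < v"
      using cInf_lessD[of "{s \<in> {0..T}. p \<le> s + f s}" v] v unfolding graph_time_def by auto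
    with Dup_mono[OF f, of s' v] show "p \<le> v + f v"
      by auto
  qed (use s in auto)
  moreover have "((\<lambda>v. v + f v) \<longlongrightarrow> ?s + f ?s) (at_right ?s)"
    by (intro tendsto_intros cadlag_tendsto_right[OF Dup_cadlag[OF f]] s)
  ultimately show ?thesis
    by (intro tendsto_lowerbound) auto
qed (use p in simp)

lemma graph_time_add_lft_le:
  assumes p: "f 0 \<le> p" "p \<le> T + f T"
  shows "graph_time f T p + lft f (graph_time f T p) \<le> p"
proof (cases "graph_time f T p = 0")
  case False
  let ?s = "graph_time f T p"
  have s: "0 < ?s"
    using graph_time_bounds[OF p(2)] False by auto
  have "\<forall>\<^sub>F v in at_left ?s. v + f v \<le> p"
    unfolding eventually_at_left_field
    using s add_less_if_less_graph_time[OF p(2)] by (intro exI[of _ 0]) (auto intro: less_imp_le)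
  moreover have "((\<lambda>v. v + f v) \<longlongrightarrow> ?s + lft f ?s) (at_left ?s)"
    by (intro tendsto_intros cadlag_tendsto_lft[OF Dup_cadlag[OF f] s])
  ultimately show ?thesis
    by (intro tendsto_upperbound) auto
qed (use p in \<open>simp add: lft_def\<close>)

lemma graph_time_mono:
  assumes "p \<le> p'" "p' \<le> T + f T"
  shows "graph_time f T p \<le> graph_time f T p'"
  unfolding graph_time_def using assms T
  by (intro cInf_superset_mono) (auto intro: bdd_belowI[of _ 0])

lemma graph_time_diff_le:
  assumes p: "p \<le> p'" "p' \<le> T + f T"
  shows "graph_time f T p' - graph_time f T p \<le> p' - p"
proof (rule ccontr)
  let ?s = "graph_time f T p" and ?s' = "graph_time f T p'"
  assume "\<not> ?thesis"
  then have gap: "?s + (p' - p) < ?s'"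
    by simp
  define v where "v = (?s + (p' - p) + ?s') / 2"
  have v: "?s + (p' - p) < v" "v < ?s'"
    using gap unfolding v_def by auto
  have s: "0 \<le> ?s"
    using graph_time_bounds p by auto
  have "v + f v < p'"
    using add_less_if_less_graph_time[OF p(2), of v] s p v by simp
  moreover have "f ?s \<le> f v"
    using s p v by (intro Dup_mono[OF f]) auto
  moreover have "p \<le> ?s + f ?s"
    using le_graph_time_add p by simp
  ultimately show False
    using v by linarith
qed

lemma continuous_on_graph_time: "continuous_on {..T + f T} (graph_time f T)"
proof (rule lipschitz_on_continuous_on)
  show "1-lipschitz_on {..T + f T} (graph_time f T)"
  proof (rule lipschitz_onI)
    fix p p' assume "p \<in> {..T + f T}" "p' \<in> {..T + f T}"
    then show "dist (graph_time f T p) (graph_time f T p') \<le> 1 * dist p p'"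
      using graph_time_diff_le[of p p'] graph_time_diff_le[of p' p]
        graph_time_mono[of p p'] graph_time_mono[of p' p]
      by (cases "p \<le> p'") (auto simp: dist_real_def)
  qed simp
qed

lemma graph_time_eq:
  assumes s: "s \<in> {0..T}" and z: "lft f s \<le> z" "z \<le> f s"
  shows "graph_time f T (s + z) = s"
proof (rule antisym)
  show le: "graph_time f T (s + z) \<le> s"
    using s z by (intro graph_time_le) auto
  have p: "s + z \<le> T + f T"
    using s z Dup_mono[OF f, of s T] by auto
  show "s \<le> graph_time f T (s + z)"
  proof (rule ccontr)
    assume "\<not> ?thesis"
    then have "f (graph_time f T (s + z)) \<le> lft f s"
      using graph_time_bounds[OF p] by (intro Dup_le_lft[OF f]) auto
    with le_graph_time_add[OF p] \<open>\<not> ?thesis\<close> z show False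
      by linarith
  qed
qed

text \<open>Without this, \<open>dM1T\<close> would be the unspecified value \<open>Inf {}\<close>.\<close>
lemma PiT_nonempty: "PiT f T \<noteq> {}"
proof -
  define L where "L = T + f T - f 0"
  have L: "L > 0"
    using Dup_mono[OF f, of 0 T] T unfolding L_def by simp
  define p where "p a = f 0 + a * L" for a
  define r where "r a = graph_time f T (p a)" for a
  define u where "u a = p a - r a" for a
  have p_mono: "p a \<le> p b" if "a \<le> b" for a b
    using that L unfolding p_def by (simp add: mult_right_mono)
  have p_range: "f 0 \<le> p a \<and> p a \<le> T + f T" if "a \<in> {0..1}" for a
    using p_mono[of 0 a] p_mono[of a 1] that unfolding p_def L_def by auto
  have seg: "closed_segment (lft f s) (f s) = {lft f s..f s}" if "s \<in> {0..T}" for s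
    using Dup_lft_le[OF f, of s] that by (simp add: closed_segment_eq_real_ivl)
  have in_graph: "r a \<in> {0..T} \<and> lft f (r a) \<le> u a \<and> u a \<le> f (r a)" if "a \<in> {0..1}" for a
    using graph_time_bounds graph_time_add_lft_le le_graph_time_add p_range[OF that]
    unfolding u_def r_def by force
  have "continuous_on {0..1} r"
    unfolding r_def using p_range
    by (intro continuous_on_compose2[OF continuous_on_graph_time]) (auto simp: p_def intro!: continuous_intros)
  moreover from this have "continuous_on {0..1} u"
    unfolding u_def p_def by (intro continuous_intros)
  moreover have "(\<lambda>a. (r a, u a)) ` {0..1} = GammaT f T"
  proof
    show "(\<lambda>a. (r a, u a)) ` {0..1} \<subseteq> GammaT f T"
      using in_graph seg unfolding GammaT_def by auto
    show "GammaT f T \<subseteq> (\<lambda>a. (r a, u a)) ` {0..1}"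
    proof safe
      fix s z assume "(s, z) \<in> GammaT f T"
      then have s: "s \<in> {0..T}" and z: "lft f s \<le> z" "z \<le> f s"
        using seg unfolding GammaT_def by auto
      define a where "a = (s + z - f 0) / L"
      have "p a = s + z"
        unfolding a_def p_def using L by simp
      moreover have "a \<in> {0..1}"
        using Dup_le_lft0[OF f, of s] Dup_mono[OF f, of s T] s z L
        unfolding a_def L_def by (auto simp: field_simps)
      ultimately show "(s, z) \<in> (\<lambda>a. (r a, u a)) ` {0..1}"
        using graph_time_eq[OF s z] unfolding r_def u_def by force
    qed
  qed
  moreover have "r 0 = 0"
    using graph_time_eq[of 0 "f 0"] T unfolding r_def p_def by (simp add: lft_def)
  moreover have "r 1 = T"
    using graph_time_eq[of T "f T"] Dup_lft_le[OF f, of T] T unfolding r_def p_def L_def by simp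
  moreover have "graph_le f (r a, u a) (r b, u b)" if "0 \<le> a" "a \<le> b" "b \<le> 1" for a b
  proof -
    have "r a \<le> r b"
      unfolding r_def using p_mono p_range that by (intro graph_time_mono) auto
    moreover have "u a \<le> u b" if "r a = r b"
      using p_mono[of a b] that \<open>a \<le> b\<close> unfolding u_def by simp
    ultimately show ?thesis
      using in_graph[of a] that unfolding graph_le_def by auto
  qed
  ultimately have "(r, u) \<in> PiT f T"
    unfolding PiT_def by auto
  then show ?thesis
    by blast
qed

end

lemma dM1T_less_imp_close_parametrisations:
  assumes f: "f \<in> Dup" and g: "g \<in> Dup" and T: "T > 0" and less: "dM1T T f g < e"
  obtains r1 u1 r2 u2 where "(r1, u1) \<in> PiT f T" "(r2, u2) \<in> PiT g T"
    "\<And>a. a \<in> {0..1} \<Longrightarrow> \<bar>r1 a - r2 a\<bar> < e \<and> \<bar>u1 a - u2 a\<bar> < e"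
proof -
  let ?S = "{max (Sup ((\<lambda>t. \<bar>r1 t - r2 t\<bar>) ` {0..1})) (Sup ((\<lambda>t. \<bar>u1 t - u2 t\<bar>) ` {0..1}))
             | r1 u1 r2 u2. (r1, u1) \<in> PiT f T \<and> (r2, u2) \<in> PiT g T}"
  have "?S \<noteq> {}"
    using PiT_nonempty[OF f T] PiT_nonempty[OF g T] by fast
  then obtain r1 u1 r2 u2 where p1: "(r1, u1) \<in> PiT f T" and p2: "(r2, u2) \<in> PiT g T"
    and lt: "max (Sup ((\<lambda>t. \<bar>r1 t - r2 t\<bar>) ` {0..1})) (Sup ((\<lambda>t. \<bar>u1 t - u2 t\<bar>) ` {0..1})) < e"
    using cInf_lessD[of ?S e] less unfolding dM1T_def by blast
  have bdd: "bdd_above ((\<lambda>t. \<bar>v1 t - v2 t\<bar>) ` {0..1})"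
    if "continuous_on {0..1} v1" "continuous_on {0..1} v2" for v1 v2 :: "real \<Rightarrow> real"
    using that by (intro bounded_imp_bdd_above compact_imp_bounded compact_continuous_image
        continuous_intros) auto
  have "\<bar>r1 a - r2 a\<bar> < e \<and> \<bar>u1 a - u2 a\<bar> < e" if "a \<in> {0..1}" for a
    using p1 p2 less_if_max_Sup_less[OF lt bdd bdd that] unfolding PiT_def by auto
  with p1 p2 show ?thesis
    by (rule that)
qed

lemma close_parametrisations_imp_graph_point:
  assumes p1: "(r1, u1) \<in> PiT f T" and p2: "(r2, u2) \<in> PiT g T"
    and close: "\<And>a. a \<in> {0..1} \<Longrightarrow> \<bar>r1 a - r2 a\<bar> < e \<and> \<bar>u1 a - u2 a\<bar> < e"
    and t: "t \<in> {0..T}"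
  obtains s z where "s \<in> {0..T}" "\<bar>s - t\<bar> < e" "z \<in> closed_segment (lft g s) (g s)" "\<bar>f t - z\<bar> < e"
proof -
  have "(t, f t) \<in> GammaT f T"
    using t unfolding GammaT_def by auto
  then have "(t, f t) \<in> (\<lambda>a. (r1 a, u1 a)) ` {0..1}"
    using p1 unfolding PiT_def by auto
  then obtain a where a: "a \<in> {0..1}" "r1 a = t" "u1 a = f t"
    by auto
  have "(r2 a, u2 a) \<in> GammaT g T"
    using p2 a(1) unfolding PiT_def by blast
  then show ?thesis
    using that[of "r2 a" "u2 a"] close[OF a(1)] a unfolding GammaT_def by (auto simp: abs_minus_commute)
qed

lemma dM1_tendsto_0_imp_close:
  assumes y: "y \<in> Dup" and ys: "\<And>n. ys n \<in> Dup" and lim: "(\<lambda>n. dM1 (ys n) y) \<longlonglongrightarrow> 0"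
    and T: "T > 0" and e: "0 < e" "e \<le> 1"
  shows "eventually (\<lambda>n. \<forall>t\<in>{0..T}. \<exists>s\<in>{0..T+1}. \<exists>z\<in>closed_segment (lft y s) (y s).
           \<bar>s - t\<bar> < e \<and> \<bar>ys n t - z\<bar> < e) sequentially"
  using exp_weighted_integral_tendsto_0_imp_small[OF lim[unfolded dM1_def] T e]
proof (rule eventually_mono)
  fix n assume "\<exists>S\<in>{T..T+1}. dM1T S (ys n) y < e"
  then obtain S where S: "S \<in> {T..T+1}" "dM1T S (ys n) y < e"
    by blast
  with T have "S > 0"
    by auto
  obtain r1 u1 r2 u2 where p1: "(r1, u1) \<in> PiT (ys n) S" and p2: "(r2, u2) \<in> PiT y S"
    and close: "\<And>a. a \<in> {0..1} \<Longrightarrow> \<bar>r1 a - r2 a\<bar> < e \<and> \<bar>u1 a - u2 a\<bar> < e"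
    using dM1T_less_imp_close_parametrisations[OF ys y \<open>S > 0\<close> S(2)] by blast
  show "\<forall>t\<in>{0..T}. \<exists>s\<in>{0..T+1}. \<exists>z\<in>closed_segment (lft y s) (y s). \<bar>s - t\<bar> < e \<and> \<bar>ys n t - z\<bar> < e"
  proof
    fix t assume "t \<in> {0..T}"
    then obtain s z where "s \<in> {0..S}" "\<bar>s - t\<bar> < e" "z \<in> closed_segment (lft y s) (y s)" "\<bar>ys n t - z\<bar> < e"
      using close_parametrisations_imp_graph_point[OF p1 p2 close, of t] S by auto
    then show "\<exists>s\<in>{0..T+1}. \<exists>z\<in>closed_segment (lft y s) (y s). \<bar>s - t\<bar> < e \<and> \<bar>ys n t - z\<bar> < e"
      using S by auto
  qed
qed

section \<open>Convergence of the compositions\<close>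

lemma eventually_composition_close:
  fixes x :: "real \<Rightarrow> 'a::real_normed_vector" and xs :: "nat \<Rightarrow> real \<Rightarrow> 'a"
  assumes x: "cadlag x" and y: "y \<in> Dup" and xs: "\<And>n. cadlag (xs n)" and ys: "\<And>n. ys n \<in> Dup"
    and limx: "(\<lambda>n. dJ1 (xs n) x) \<longlonglongrightarrow> 0" and limy: "(\<lambda>n. dM1 (ys n) y) \<longlonglongrightarrow> 0"
    and T: "T > 0" and e: "0 < e" "e \<le> 1"
  shows "eventually (\<lambda>n. \<forall>t\<in>{0..T}. \<exists>s\<in>{0..T+1}. \<exists>z\<in>closed_segment (lft y s) (y s).
           \<exists>v\<in>{0..y (T+1) + 2}. \<bar>s - t\<bar> < e \<and> \<bar>ys n t - z\<bar> < e \<and> \<bar>v - ys n t\<bar> < e \<and>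
             norm (xs n (ys n t) - x v) < e) sequentially"
proof -
  let ?M = "y (T+1) + 1"
  have "?M > 0"
    using Dup_nonneg[OF y, of "T+1"] T by simp
  show ?thesis
    using dJ1_tendsto_0_imp_close[OF x xs limx \<open>?M > 0\<close> e] dM1_tendsto_0_imp_close[OF y ys limy T e]
  proof eventually_elim
    case (elim n)
    show ?case
    proof
      fix t assume t: "t \<in> {0..T}"
      then obtain s z where s: "s \<in> {0..T+1}" "\<bar>s - t\<bar> < e"
        and z: "z \<in> closed_segment (lft y s) (y s)" "\<bar>ys n t - z\<bar> < e"
        using elim(2) by blast
      have "z \<le> y s"
        using z(1) Dup_lft_le[OF y, of s] s by (auto simp: closed_segment_eq_real_ivl)
      also have "y s \<le> y (T+1)"
        using s by (intro Dup_mono[OF y]) auto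
      finally have "ys n t \<in> {0..?M}"
        using z(2) e Dup_nonneg[OF ys, of t n] t by auto
      then obtain v where v: "v \<in> {0..?M + 1}" "\<bar>v - ys n t\<bar> < e" "norm (xs n (ys n t) - x v) < e"
        using elim(1) by blast
      then show "\<exists>s\<in>{0..T+1}. \<exists>z\<in>closed_segment (lft y s) (y s). \<exists>v\<in>{0..y (T+1) + 2}.
          \<bar>s - t\<bar> < e \<and> \<bar>ys n t - z\<bar> < e \<and> \<bar>v - ys n t\<bar> < e \<and> norm (xs n (ys n t) - x v) < e"
        using s z by (intro bexI[of _ s] bexI[of _ z] bexI[of _ v] conjI) auto
    qed
  qed
qed

lemma composition_eventually_bounded:
  fixes x :: "real \<Rightarrow> 'a::real_normed_vector" and xs :: "nat \<Rightarrow> real \<Rightarrow> 'a"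
  assumes x: "cadlag x" and y: "y \<in> Dup" and xs: "\<And>n. cadlag (xs n)" and ys: "\<And>n. ys n \<in> Dup"
    and limx: "(\<lambda>n. dJ1 (xs n) x) \<longlonglongrightarrow> 0" and limy: "(\<lambda>n. dM1 (ys n) y) \<longlonglongrightarrow> 0"
    and T: "T > 0"
  obtains B where "eventually (\<lambda>n. \<forall>t\<in>{0..T}. norm (xs n (ys n t) - x (y t)) \<le> B) sequentially"
proof -
  obtain Bx where Bx: "\<And>v. v \<in> {0..y (T+1) + 2} \<Longrightarrow> norm (x v) \<le> Bx"
    using cadlag_bounded_Icc[OF x] by metis
  have "eventually (\<lambda>n. \<forall>t\<in>{0..T}. norm (xs n (ys n t) - x (y t)) \<le> 1 + 2 * Bx) sequentially"
    using eventually_composition_close[OF x y xs ys limx limy T zero_less_one order_refl]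
  proof (rule eventually_mono)
    fix n
    assume near: "\<forall>t\<in>{0..T}. \<exists>s\<in>{0..T+1}. \<exists>z\<in>closed_segment (lft y s) (y s).
           \<exists>v\<in>{0..y (T+1) + 2}. \<bar>s - t\<bar> < 1 \<and> \<bar>ys n t - z\<bar> < 1 \<and> \<bar>v - ys n t\<bar> < 1 \<and>
             norm (xs n (ys n t) - x v) < 1"
    show "\<forall>t\<in>{0..T}. norm (xs n (ys n t) - x (y t)) \<le> 1 + 2 * Bx"
    proof
      fix t assume t: "t \<in> {0..T}"
      with near obtain v where v: "v \<in> {0..y (T+1) + 2}" "norm (xs n (ys n t) - x v) < 1"
        by blast
      have "y t \<in> {0..y (T+1) + 2}"
        using t Dup_nonneg[OF y, of t] Dup_mono[OF y, of t "T+1"] by auto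
      then have "norm (x v - x (y t)) \<le> 2 * Bx"
        using norm_triangle_ineq4[of "x v" "x (y t)"] Bx[OF v(1)] Bx by fastforce
      with v(2) show "norm (xs n (ys n t) - x (y t)) \<le> 1 + 2 * Bx"
        using norm_triangle_ineq[of "xs n (ys n t) - x v" "x v - x (y t)"] by simp
    qed
  qed
  then show ?thesis
    by (rule that)
qed

lemma composition_tendsto_at_continuity_point:
  fixes x :: "real \<Rightarrow> 'a::real_normed_vector" and xs :: "nat \<Rightarrow> real \<Rightarrow> 'a"
  assumes x: "cadlag x" and y: "y \<in> Dup" and xs: "\<And>n. cadlag (xs n)" and ys: "\<And>n. ys n \<in> Dup"
    and limx: "(\<lambda>n. dJ1 (xs n) x) \<longlonglongrightarrow> 0" and limy: "(\<lambda>n. dM1 (ys n) y) \<longlonglongrightarrow> 0"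
    and t: "t > 0" and cy: "isCont y t" and cx: "continuous (at (y t) within {0..}) x"
  shows "(\<lambda>n. xs n (ys n t)) \<longlonglongrightarrow> x (y t)"
proof (rule tendstoI)
  fix h :: real assume "h > 0"
  then obtain dx where dx: "dx > 0"
    "\<And>v. v \<in> {0..} \<Longrightarrow> dist v (y t) < dx \<Longrightarrow> dist (x v) (x (y t)) < h / 2"
    using cx unfolding continuous_within_eps_delta by (metis half_gt_zero)
  obtain dy where dy: "dy > 0" "\<And>v. dist v t < dy \<Longrightarrow> dist (y v) (y t) < dx / 3"
    using cy dx unfolding continuous_at_eps_delta by (metis divide_pos_pos zero_less_numeral)
  define e where "e = min 1 (min dy (min (h / 2) (dx / 3)))"
  have e: "0 < e" "e \<le> 1"
    unfolding e_def using \<open>h > 0\<close> dx dy by auto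
  show "eventually (\<lambda>n. dist (xs n (ys n t)) (x (y t)) < h) sequentially"
    using eventually_composition_close[OF x y xs ys limx limy t e]
  proof (rule eventually_mono)
    fix n
    assume near: "\<forall>t'\<in>{0..t}. \<exists>s\<in>{0..t+1}. \<exists>z\<in>closed_segment (lft y s) (y s).
           \<exists>v\<in>{0..y (t+1) + 2}. \<bar>s - t'\<bar> < e \<and> \<bar>ys n t' - z\<bar> < e \<and> \<bar>v - ys n t'\<bar> < e \<and>
             norm (xs n (ys n t') - x v) < e"
    then obtain s z v where s: "s \<in> {0..t+1}" "\<bar>s - t\<bar> < e"
      and z: "z \<in> closed_segment (lft y s) (y s)" "\<bar>ys n t - z\<bar> < e"
      and v: "v \<in> {0..y (t+1) + 2}" "\<bar>v - ys n t\<bar> < e" "norm (xs n (ys n t) - x v) < e"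
      using t by fastforce
    have y_near: "dist (y v') (y t) \<le> dx / 3" if "\<bar>v' - t\<bar> < dy" for v'
      using dy(2)[of v'] that by (simp add: dist_real_def)
    have "\<bar>s - t\<bar> < dy"
      using s(2) unfolding e_def by linarith
    then have "lft y s \<in> cball (y t) (dx / 3)" "y s \<in> cball (y t) (dx / 3)"
      using dist_lft_le[OF Dup_cadlag[OF y] y_near] y_near s(1) by (auto simp: dist_commute)
    then have "z \<in> cball (y t) (dx / 3)"
      using closed_segment_subset[OF _ _ convex_cball] z(1) by blast
    moreover have "e \<le> dx / 3" "e \<le> h / 2"
      unfolding e_def by auto
    ultimately have "dist v (y t) < dx"
      using z(2) v(2) unfolding mem_cball dist_real_def by arith
    then have "dist (x v) (x (y t)) < h / 2"
      using v(1) by (intro dx(2)) auto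
    moreover have "dist (xs n (ys n t)) (x v) < h / 2"
      using v(3) \<open>e \<le> h / 2\<close> by (simp add: dist_norm)
    ultimately show "dist (xs n (ys n t)) (x (y t)) < h"
      using dist_triangle[of "xs n (ys n t)" "x (y t)" "x v"] by linarith
  qed
qed

lemma countable_composition_discontinuities:
  fixes x :: "real \<Rightarrow> 'a::metric_space"
  assumes x: "cadlag x" and y: "y \<in> Dup" and xy: "continuous_on {0..} x \<or> y \<in> Dupup"
  shows "countable {t. 0 < t \<and> \<not> (isCont y t \<and> continuous (at (y t) within {0..}) x)}"
proof -
  have "countable {t. 0 < t \<and> \<not> continuous (at (y t) within {0..}) x}"
    using xy
  proof
    assume "continuous_on {0..} x"
    then have "{t. 0 < t \<and> \<not> continuous (at (y t) within {0..}) x} = {}"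
      using Dup_nonneg[OF y] by (auto simp: continuous_on_eq_continuous_within)
    then show ?thesis
      by (metis countable_empty)
  next
    assume "y \<in> Dupup"
    then have y_strict: "strict_mono_on {0..} y"
      unfolding Dupup_def by auto
    let ?D = "{t \<in> {0..}. y t \<in> {u. 0 < u \<and> \<not> isCont x u}}"
    have "{t. 0 < t \<and> \<not> continuous (at (y t) within {0..}) x} \<subseteq> ?D"
    proof
      fix t assume "t \<in> {t. 0 < t \<and> \<not> continuous (at (y t) within {0..}) x}"
      then have t: "0 < t" "\<not> continuous (at (y t) within {0..}) x"
        by auto
      have "0 \<le> y 0" "y 0 < y t"
        using Dup_nonneg[OF y, of 0] y_strict t(1) by (auto simp: strict_mono_on_def)
      with t show "t \<in> ?D"
        by (auto intro: continuous_at_imp_continuous_within)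
    qed
    moreover have "countable ?D"
    proof (rule countable_image_inj_on)
      show "countable (y ` ?D)"
        by (rule countable_subset[OF _ countable_discontinuities_cadlag[OF x]]) auto
      show "inj_on y ?D"
        by (rule inj_on_subset[OF strict_mono_on_imp_inj_on[OF y_strict]]) auto
    qed
    ultimately show ?thesis
      by (rule countable_subset)
  qed
  moreover have "countable {t. 0 < t \<and> \<not> isCont y t}"
    by (rule countable_discontinuities_cadlag[OF Dup_cadlag[OF y]])
  ultimately have "countable ({t. 0 < t \<and> \<not> continuous (at (y t) within {0..}) x} \<union>
      {t. 0 < t \<and> \<not> isCont y t})"
    by (rule countable_Un)
  then show ?thesis
    by (rule countable_subset[rotated]) auto
qed

lemma borel_measurable_cadlag_comp_Dup:
  fixes x :: "real \<Rightarrow> 'a::metric_space"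
  assumes x: "cadlag x" and y: "y \<in> Dup"
  shows "(\<lambda>t. x (y (max 0 t))) \<in> borel_measurable borel"
proof -
  have "(\<lambda>t. y (max 0 t)) \<in> borel_measurable borel"
    by (rule borel_measurable_mono) (auto simp: mono_def intro!: Dup_mono[OF y])
  from measurable_compose[OF this borel_measurable_cadlag[OF x]] show ?thesis
    using Dup_nonneg[OF y] by simp
qed

lemma LBINT_Icc_tendsto_0_if_bounded:
  fixes F :: "nat \<Rightarrow> real \<Rightarrow> real"
  assumes meas: "\<And>n. F n \<in> borel_measurable borel"
    and bound: "eventually (\<lambda>n. \<forall>t\<in>{a..b}. \<bar>F n t\<bar> \<le> B) sequentially"
    and lim: "AE t in lborel. t \<in> {a..b} \<longrightarrow> (\<lambda>n. F n t) \<longlonglongrightarrow> 0"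
  shows "(\<lambda>n. LBINT t:{a..b}. F n t) \<longlonglongrightarrow> 0"
proof -
  obtain N where N: "\<And>n t. n \<ge> N \<Longrightarrow> t \<in> {a..b} \<Longrightarrow> \<bar>F n t\<bar> \<le> B"
    using bound unfolding eventually_sequentially by blast
  have "(\<lambda>n. LBINT t:{a..b}. F (n + N) t) \<longlonglongrightarrow> integral\<^sup>L lborel (\<lambda>t::real. 0 :: real)"
    unfolding set_lebesgue_integral_def
  proof (rule Bochner_Integration.integral_dominated_convergence[where w="\<lambda>t. B * indicator {a..b} t"
])
    show "integrable lborel (\<lambda>t. B * indicator {a..b} t)"
      by (rule borel_integrable_atLeastAtMost) simp
    show "AE t in lborel. (\<lambda>n. indicator {a..b} t *\<^sub>R F (n + N) t) \<longlonglongrightarrow> 0"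
      using lim by eventually_elim (auto simp: indicator_def intro: LIMSEQ_ignore_initial_segment)
    show "AE t in lborel. norm (indicator {a..b} t *\<^sub>R F (n + N) t) \<le> B * indicator {a..b} t" for n
      using N[of "n + N"] by (intro AE_I2) (auto simp: indicator_def)
  qed (use meas in auto)
  then show ?thesis
    by (simp add: LIMSEQ_offset)
qed

lemma composition_LBINT_tendsto_0:
  fixes x :: "real \<Rightarrow> 'a::{real_normed_vector, second_countable_topology}"
    and xs :: "nat \<Rightarrow> real \<Rightarrow> 'a"
  assumes x: "cadlag x" and y: "y \<in> Dup" and xy: "continuous_on {0..} x \<or> y \<in> Dupup"
    and xs: "\<And>n. cadlag (xs n)" and ys: "\<And>n. ys n \<in> Dup"
    and limx: "(\<lambda>n. dJ1 (xs n) x) \<longlonglongrightarrow> 0" and limy: "(\<lambda>n. dM1 (ys n) y) \<longlonglongrightarrow> 0"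
    and T: "T > 0"
  shows "(\<lambda>n. LBINT t:{0..T}. norm ((xs n \<circ> ys n) t - (x \<circ> y) t)) \<longlonglongrightarrow> 0"
proof -
  define F where "F n t = norm (xs n (ys n (max 0 t)) - x (y (max 0 t)))" for n t
  have F: "F n t = norm (xs n (ys n t) - x (y t))" if "t \<in> {0..T}" for n t
    using that by (simp add: F_def)
  have "F n \<in> borel_measurable borel" for n
  proof -
    have "(\<lambda>t. xs n (ys n (max 0 t)) - x (y (max 0 t))) \<in> borel_measurable borel"
      using borel_measurable_cadlag_comp_Dup[OF xs ys] borel_measurable_cadlag_comp_Dup[OF x y]
      by (rule borel_measurable_diff)
    from measurable_compose[OF this borel_measurable_norm] show ?thesis
      unfolding F_def .
  qed
  moreover obtain B where "eventually (\<lambda>n. \<forall>t\<in>{0..T}. norm (xs n (ys n t) - x (y t)) \<le> B) sequentially"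
    using composition_eventually_bounded[OF x y xs ys limx limy T] by blast
  then have "eventually (\<lambda>n. \<forall>t\<in>{0..T}. \<bar>F n t\<bar> \<le> B) sequentially"
    by eventually_elim (simp add: F)
  moreover have "AE t in lborel. t \<in> {0..T} \<longrightarrow> (\<lambda>n. F n t) \<longlonglongrightarrow> 0"
  proof -
    let ?E = "insert 0 {t. 0 < t \<and> \<not> (isCont y t \<and> continuous (at (y t) within {0..}) x)}"
    have "AE t in lborel. t \<notin> ?E"
      using countable_composition_discontinuities[OF x y xy]
      by (intro AE_not_in countable_imp_null_set_lborel) simp
    then show ?thesis
    proof eventually_elim
      case (elim t)
      show ?case
      proof
        assume t: "t \<in> {0..T}"
        with elim have "0 < t" "isCont y t" "continuous (at (y t) within {0..}) x"
          by auto
        then have "(\<lambda>n. xs n (ys n t)) \<longlonglongrightarrow> x (y t)"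
          by (rule composition_tendsto_at_continuity_point[OF x y xs ys limx limy])
        from tendsto_norm_zero[OF LIM_zero[OF this]] show "(\<lambda>n. F n t) \<longlonglongrightarrow> 0"
          using F[OF t] by simp
      qed
    qed
  qed
  ultimately have "(\<lambda>n. LBINT t:{0..T}. F n t) \<longlonglongrightarrow> 0"
    by (rule LBINT_Icc_tendsto_0_if_bounded)
  moreover have "(LBINT t:{0..T}. F n t) = (LBINT t:{0..T}. norm ((xs n \<circ> ys n) t - (x \<circ> y) t))" for n
    using F by (intro set_lebesgue_integral_cong) auto
  ultimately show ?thesis
    by simp
qed

theorem theorem3p10:
  fixes x :: "real \<Rightarrow> real ^ 'd" and y :: "real \<Rightarrow> real"
    and xs :: "nat \<Rightarrow> real \<Rightarrow> real ^ 'd" and ys :: "nat \<Rightarrow> real \<Rightarrow> real"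
  assumes "cadlag x" and "y \<in> Dup"
    and "continuous_on {0..} x \<or> y \<in> Dupup"
    and "\<And>n. cadlag (xs n)" and "\<And>n. ys n \<in> Dup"
    and "(\<lambda>n. dJ1 (xs n) x) \<longlonglongrightarrow> 0"
    and "(\<lambda>n. dM1 (ys n) y) \<longlonglongrightarrow> 0"
  shows "L1loc_tendsto (\<lambda>n. xs n \<circ> ys n) (x \<circ> y)"
  unfolding L1loc_tendsto_def using composition_LBINT_tendsto_0[OF assms] by blast

end
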